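(* Let $H$ be a regular non-bipartite graph whose adjacency eigenvalues are integers all having the same 2-adic valuation $\nu_2$. If $G=K_{2}\times H$, then for every vertex $u$ of $G$, $\uparrow^{2}G$ has Laplacian perfect state transfer between $(0,u)$ and $(1,u)$.
   Context: All graphs are simple, undirected and unweighted. The direct product $G\times H$ is the graph with adjacency matrix $A(G)\otimes A(H)$. For a nonzero integer $n$, $\nu_2(n)$ is the exponent of the largest power of $2$ dividing $n$, and $\nu_2(0)=\infty$. The blow-up $\uparrow^{2}G$ has vertex set $\mathbb{Z}_2\times V(G)$, with $(l,u)\sim(m,v)$ iff $u\sim v$ in $G$. A graph with Laplacian $L=D-A$ has Laplacian perfect state transfer between $a,b$ if $\exp(i\tau L)\mathbf{e}_a=\gamma\mathbf{e}_b$ for some $\tau>0$, $\gamma\in\mathbb{C}$. *)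

theory Defs
  imports Complex_Main "HOL-Library.Extended_Nat" "HOL-Computational_Algebra.Primes"
begin

definition simple_graph :: "('a \<Rightarrow> 'a \<Rightarrow> bool) \<Rightarrow> bool" where
  "simple_graph E \<longleftrightarrow> (\<forall>u v. E u v \<longrightarrow> E v u) \<and> (\<forall>u. \<not> E u u)"

definition degree :: "('a::finite \<Rightarrow> 'a \<Rightarrow> bool) \<Rightarrow> 'a \<Rightarrow> nat" where
  "degree E u = card {v. E u v}"

definition regular :: "('a::finite \<Rightarrow> 'a \<Rightarrow> bool) \<Rightarrow> bool" where
  "regular E \<longleftrightarrow> (\<exists>k. \<forall>u. degree E u = k)"

definition bipartite :: "('a \<Rightarrow> 'a \<Rightarrow> bool) \<Rightarrow> bool" where
  "bipartite E \<longleftrightarrow> (\<exists>c :: 'a \<Rightarrow> bool. \<forall>u v. E u v \<longrightarrow> c u \<noteq> c v)"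

definition adj :: "('a \<Rightarrow> 'a \<Rightarrow> bool) \<Rightarrow> 'a \<Rightarrow> 'a \<Rightarrow> real" where
  "adj E u v = (if E u v then 1 else 0)"

text \<open>Adjacency eigenvalue (the adjacency matrix is real symmetric, so real eigenvalues/eigenvectors).\<close>
definition adj_eigenvalue :: "('a::finite \<Rightarrow> 'a \<Rightarrow> bool) \<Rightarrow> real \<Rightarrow> bool" where
  "adj_eigenvalue E lam \<longleftrightarrow>
     (\<exists>v :: 'a \<Rightarrow> real. v \<noteq> (\<lambda>_. 0) \<and> (\<forall>x. (\<Sum>y\<in>UNIV. adj E x y * v y) = lam * v x))"

definition nu2 :: "int \<Rightarrow> enat" where
  "nu2 n = (if n = 0 then \<infinity> else enat (multiplicity 2 n))"

text \<open>Complete graph K_2 on vertex type bool, direct product, 2-blow-up (Z_2 = bool, 0 = False).\<close>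
definition K2 :: "bool \<Rightarrow> bool \<Rightarrow> bool" where
  "K2 x y \<longleftrightarrow> x \<noteq> y"

definition dprod :: "('a \<Rightarrow> 'a \<Rightarrow> bool) \<Rightarrow> ('b \<Rightarrow> 'b \<Rightarrow> bool) \<Rightarrow> ('a \<times> 'b) \<Rightarrow> ('a \<times> 'b) \<Rightarrow> bool" where
  "dprod E F p q \<longleftrightarrow> E (fst p) (fst q) \<and> F (snd p) (snd q)"

definition blowup2 :: "('a \<Rightarrow> 'a \<Rightarrow> bool) \<Rightarrow> (bool \<times> 'a) \<Rightarrow> (bool \<times> 'a) \<Rightarrow> bool" where
  "blowup2 E p q \<longleftrightarrow> E (snd p) (snd q)"

definition laplacian :: "('a::finite \<Rightarrow> 'a \<Rightarrow> bool) \<Rightarrow> 'a \<Rightarrow> 'a \<Rightarrow> complex" where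
  "laplacian E u v = (if u = v then of_nat (degree E u) else 0) - of_real (adj E u v)"

definition mmult :: "('a::finite \<Rightarrow> 'a \<Rightarrow> complex) \<Rightarrow> ('a \<Rightarrow> 'a \<Rightarrow> complex) \<Rightarrow> 'a \<Rightarrow> 'a \<Rightarrow> complex" where
  "mmult M N u v = (\<Sum>w\<in>UNIV. M u w * N w v)"

fun mpow :: "('a::finite \<Rightarrow> 'a \<Rightarrow> complex) \<Rightarrow> nat \<Rightarrow> 'a \<Rightarrow> 'a \<Rightarrow> complex" where
  "mpow M 0 = (\<lambda>u v. if u = v then 1 else 0)"
| "mpow M (Suc k) = mmult M (mpow M k)"

definition mexp :: "('a::finite \<Rightarrow> 'a \<Rightarrow> complex) \<Rightarrow> 'a \<Rightarrow> 'a \<Rightarrow> complex" where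
  "mexp M u v = (\<Sum>k. mpow M k u v / of_nat (fact k))"

definition laplacian_pst :: "('a::finite \<Rightarrow> 'a \<Rightarrow> bool) \<Rightarrow> 'a \<Rightarrow> 'a \<Rightarrow> bool" where
  "laplacian_pst E a b \<longleftrightarrow>
     (\<exists>\<tau>::real. \<tau> > 0 \<and> (\<exists>\<gamma>::complex.
        \<forall>c. mexp (\<lambda>x y. \<i> * of_real \<tau> * laplacian E x y) c a = (if c = b then \<gamma> else 0)))"

end

(*
  Let k be the degree of H and L the Laplacian of the blow-up of G = K2 x H, which is
  2k-regular. If L v = mu v, the fibre sum s(p) = v(0,p) + v(1,p) satisfies
  A(G) s = (k - mu/2) s, while (2k - mu)(v(0,p) - v(1,p)) = 0. So either s = 0, v is
  antisymmetric in the Z_2 coordinate and mu = 2k, or s is an adjacency eigenvector of G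
  for lam = k - mu/2; then lam or -lam is an eigenvalue of H (look at s(0,.) + s(1,.) and
  s(0,.) - s(1,.)), hence an integer 2^nu q with q odd, so lam <> 0 and v is symmetric.
  With tau = pi / 2^(nu+1) we get exp(2 i tau lam) = -1 for every eigenvalue of H, and in
  both cases exp(i tau mu) v(l,p) = -exp(2 i tau k) v(1-l,p). Expanding e_(0,u) in
  eigenvectors of L (the spectral theorem) gives exp(i tau L) e_(0,u) = -exp(2 i tau k) e_(1,u).
  Non-bipartiteness only ensures k > 0, so that nu, read off from the eigenvalue k, is finite.
*)

theory Submission
  imports Defs "HOL-Analysis.Analysis"
begin

section \<open>Spectral theorem for real symmetric matrices\<close>

lemma symmetric_matrix_inner_commute:
  fixes A :: "real^'n^'n"
  assumes "transpose A = A"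
  shows "inner x (A *v y) = inner y (A *v x)"
proof -
  have "inner x (A *v y) = inner (x v* A) y" by (simp add: dot_lmul_matrix)
  also have "x v* A = A *v x" using vector_transpose_matrix[of x A] assms by simp
  finally show ?thesis by (simp add: inner_commute)
qed

lemma quadratic_nonpos_imp_linear_coeff_zero:
  fixes a b :: real
  assumes "\<And>t. a * t + b * t\<^sup>2 \<le> 0"
  shows "a = 0"
proof (rule ccontr)
  assume "a \<noteq> 0"
  define t where "t = a / (\<bar>b\<bar> + 1)"
  have "a = t * (\<bar>b\<bar> + 1)" by (simp add: t_def add_pos_nonneg)
  hence "a * t - \<bar>b\<bar> * t\<^sup>2 = t\<^sup>2" by (simp add: power2_eq_square algebra_simps)
  moreover have "0 < t\<^sup>2" using \<open>a \<noteq> 0\<close> by (simp add: t_def add_pos_nonneg)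
  moreover have "- \<bar>b\<bar> * t\<^sup>2 \<le> b * t\<^sup>2" using mult_right_mono[of "- \<bar>b\<bar>" b "t\<^sup>2"] by simp
  ultimately have "0 < a * t + b * t\<^sup>2" by linarith
  with assms[of t] show False by simp
qed

lemma rayleigh_maximizer_eigenvector:
  fixes A :: "real^'n^'n"
  assumes sym: "transpose A = A" and U: "subspace U" and inv: "\<And>x. x \<in> U \<Longrightarrow> A *v x \<in> U"
    and u: "u \<in> U" "inner u u = 1"
    and max: "\<And>x. x \<in> U \<Longrightarrow> inner x (A *v x) \<le> inner u (A *v u) * inner x x"
  shows "A *v u = inner u (A *v u) *\<^sub>R u"
proof -
  define l where "l = inner u (A *v u)"
  define y where "y = A *v u - l *\<^sub>R u"
  have yU: "y \<in> U" unfolding y_def using inv u U by (simp add: subspace_diff subspace_scale)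
  have yu: "inner y u = 0"
    using u by (simp add: y_def l_def inner_diff_left inner_commute[of "A *v u" u])
  have yAu: "inner y (A *v u) = inner y y"
    using yu by (simp add: y_def inner_diff_left inner_diff_right)
  \<comment> \<open>maximality of the Rayleigh quotient at \<open>u\<close>, tested along \<open>u + t y\<close>\<close>
  have "2 * inner y y * t + (inner y (A *v y) - l * inner y y) * t\<^sup>2 \<le> 0" for t
  proof -
    have "u + t *\<^sub>R y \<in> U" using u yU U by (simp add: subspace_add subspace_scale)
    hence "inner (u + t *\<^sub>R y) (A *v (u + t *\<^sub>R y)) \<le> l * inner (u + t *\<^sub>R y) (u + t *\<^sub>R y)"
      using max l_def by blast
    moreover have "inner (u + t *\<^sub>R y) (A *v (u + t *\<^sub>R y)) = l + 2 * t * inner y y + t\<^sup>2 * inner y (A *v y)"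
      using symmetric_matrix_inner_commute[OF sym, of u y] yAu
      by (simp add: matrix_vector_right_distrib matrix_vector_mult_scaleR inner_add_left inner_add_right
          power2_eq_square l_def algebra_simps)
    moreover have "inner (u + t *\<^sub>R y) (u + t *\<^sub>R y) = 1 + t\<^sup>2 * inner y y"
      using u yu by (simp add: inner_add_left inner_add_right inner_commute[of u y] power2_eq_square)
    ultimately have "l + 2 * t * inner y y + t\<^sup>2 * inner y (A *v y) \<le> l * (1 + t\<^sup>2 * inner y y)"
      by metis
    thus ?thesis by (simp add: algebra_simps)
  qed
  hence "2 * inner y y = 0" by (rule quadratic_nonpos_imp_linear_coeff_zero)
  thus ?thesis by (simp add: y_def l_def)
qed

lemma symmetric_matrix_invariant_subspace_eigenvector:
  fixes A :: "real^'n^'n"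
  assumes sym: "transpose A = A" and U: "subspace U" and inv: "\<And>x. x \<in> U \<Longrightarrow> A *v x \<in> U"
    and "x0 \<in> U" "x0 \<noteq> 0"
  obtains u \<mu> where "u \<in> U" "u \<noteq> 0" "A *v u = \<mu> *\<^sub>R u"
proof -
  let ?K = "U \<inter> sphere 0 1"
  have compact: "compact ?K"
    by (metis Int_commute closed_subspace compact_Int_closed compact_sphere U)
  have "x0 /\<^sub>R norm x0 \<in> ?K" using assms U by (simp add: subspace_scale)
  hence nonempty: "?K \<noteq> {}" by blast
  have continuous: "continuous_on ?K (\<lambda>x. inner x (A *v x))"
    using continuous_on_inner[OF continuous_on_id linear_continuous_on[OF matrix_vector_mul_bounded_linear]] .
  obtain u where u: "u \<in> ?K" and umax: "\<And>x. x \<in> ?K \<Longrightarrow> inner x (A *v x) \<le> inner u (A *v u)"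
    using continuous_attains_sup[OF compact nonempty continuous] by blast
  have "inner x (A *v x) \<le> inner u (A *v u) * inner x x" if "x \<in> U" for x
  proof (cases "x = 0")
    case False
    have "x /\<^sub>R norm x \<in> ?K" using that False U by (simp add: subspace_scale)
    hence "inner (x /\<^sub>R norm x) (A *v (x /\<^sub>R norm x)) \<le> inner u (A *v u)" by (rule umax)
    moreover have "inner (x /\<^sub>R norm x) (A *v (x /\<^sub>R norm x)) = inner x (A *v x) / (norm x)\<^sup>2"
      by (simp add: matrix_vector_mult_scaleR power2_eq_square field_simps)
    ultimately show ?thesis using False by (simp add: power2_norm_eq_inner divide_le_eq mult.commute)
  qed simp
  moreover have "u \<in> U" "inner u u = 1" using u by (auto simp: norm_eq_1)
  ultimately have "A *v u = inner u (A *v u) *\<^sub>R u"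
    using rayleigh_maximizer_eigenvector[OF sym U inv] by blast
  moreover have "u \<noteq> 0" using u by auto
  ultimately show ?thesis using \<open>u \<in> U\<close> that by blast
qed

lemma symmetric_matrix_eigenvectors_span:
  fixes A :: "real^'n^'n"
  assumes sym: "transpose A = A"
  shows "span {w. \<exists>\<mu>. A *v w = \<mu> *\<^sub>R w} = UNIV"
proof (rule ccontr)
  define E where "E = {w. \<exists>\<mu>. A *v w = \<mu> *\<^sub>R w}"
  assume "\<not> ?thesis"
  hence "span E \<subset> span UNIV" unfolding E_def by auto
  then obtain x where x: "x \<noteq> 0" "\<And>y. y \<in> span E \<Longrightarrow> orthogonal x y"
    using orthogonal_to_subspace_exists_gen by blast
  define U where "U = {x. \<forall>w\<in>E. inner x w = 0}"
  have U: "subspace U" unfolding U_def subspace_def by (simp add: inner_add_left)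
  have "x \<in> U" unfolding U_def using x(2) by (simp add: orthogonal_def span_base)
  \<comment> \<open>the orthogonal complement of the eigenvectors is invariant, so it would contain one\<close>
  moreover have "A *v z \<in> U" if "z \<in> U" for z
  proof -
    have "inner (A *v z) w = 0" if "w \<in> E" for w
    proof -
      obtain \<mu> where "A *v w = \<mu> *\<^sub>R w" using \<open>w \<in> E\<close> unfolding E_def by blast
      hence "inner (A *v z) w = \<mu> * inner z w"
        using symmetric_matrix_inner_commute[OF sym, of w z] by (simp add: inner_commute)
      thus ?thesis using \<open>z \<in> U\<close> \<open>w \<in> E\<close> unfolding U_def by simp
    qed
    thus ?thesis unfolding U_def by blast
  qed
  ultimately obtain u \<mu> where "u \<in> U" "u \<noteq> 0" "A *v u = \<mu> *\<^sub>R u"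
    using symmetric_matrix_invariant_subspace_eigenvector[OF sym U] x(1) by metis
  hence "u \<in> E" "inner u u = 0" unfolding U_def E_def by auto
  thus False using \<open>u \<noteq> 0\<close> by simp
qed

section \<open>Eigenvector expansion of the matrix exponential\<close>

definition in_eigenspace :: "('b::finite \<Rightarrow> 'b \<Rightarrow> real) \<Rightarrow> real \<Rightarrow> ('b \<Rightarrow> real) \<Rightarrow> bool" where
  "in_eigenspace M \<mu> w \<longleftrightarrow> (\<forall>x. (\<Sum>y\<in>UNIV. M x y * w y) = \<mu> * w x)"

lemma adj_eigenvalue_iff_in_eigenspace:
  "adj_eigenvalue E lam \<longleftrightarrow> (\<exists>w. w \<noteq> (\<lambda>_. 0) \<and> in_eigenspace (adj E) lam w)"
  by (simp add: adj_eigenvalue_def in_eigenspace_def)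

lemma in_eigenspace_scale:
  "in_eigenspace M \<mu> w \<Longrightarrow> in_eigenspace M \<mu> (\<lambda>x. c * w x)"
  by (simp add: in_eigenspace_def mult.left_commute[of _ c] sum_distrib_left[symmetric])

lemma symmetric_eigenspace_decomposition:
  fixes M :: "'b::finite \<Rightarrow> 'b \<Rightarrow> real" and v :: "'b \<Rightarrow> real"
  assumes symM: "\<And>x y. M x y = M y x"
  obtains n :: nat and f \<mu> where "\<And>i. i < n \<Longrightarrow> in_eigenspace M (\<mu> i) (f i)" and "\<And>x. v x = (\<Sum>i<n. f i x)"
proof -
  define A :: "real^'b^'b" where "A = (\<chi> i j. M i j)"
  have sym: "transpose A = A" unfolding A_def transpose_def by (simp add: vec_eq_iff symM)
  define v' :: "real^'b" where "v' = (\<chi> x. v x)"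
  have "v' \<in> span {w. \<exists>\<mu>. A *v w = \<mu> *\<^sub>R w}"
    using symmetric_matrix_eigenvectors_span[OF sym] by simp
  then obtain t r where t: "finite t" "t \<subseteq> {w. \<exists>\<mu>. A *v w = \<mu> *\<^sub>R w}" "(\<Sum>w\<in>t. r w *\<^sub>R w) = v'"
    unfolding span_explicit by blast
  have "\<forall>w\<in>t. \<exists>\<mu>. A *v w = \<mu> *\<^sub>R w" using t(2) by blast
  then obtain \<mu>' where \<mu>': "\<And>w. w \<in> t \<Longrightarrow> A *v w = \<mu>' w *\<^sub>R w"
    by metis
  obtain h where h: "bij_betw h {..<card t} t"
    using ex_bij_betw_nat_finite[OF t(1)] by (auto simp: atLeast0LessThan)
  define f where "f i x = r (h i) * h i $ x" for i x
  have eig: "in_eigenspace M (\<mu>' (h i)) (f i)" if "i < card t" for i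
  proof -
    have "(\<Sum>y\<in>UNIV. M x y * h i $ y) = \<mu>' (h i) * h i $ x" for x
      using arg_cong[OF \<mu>'[OF bij_betwE[OF h, rule_format, of i]], of "\<lambda>w. w $ x"] that
      by (simp add: A_def matrix_vector_mult_def)
    hence "in_eigenspace M (\<mu>' (h i)) (\<lambda>x. h i $ x)" by (simp add: in_eigenspace_def)
    thus ?thesis unfolding f_def by (rule in_eigenspace_scale)
  qed
  have sum: "v x = (\<Sum>i<card t. f i x)" for x
  proof -
    have "v x = (\<Sum>w\<in>t. r w *\<^sub>R w) $ x" using t(3) by (simp add: v'_def)
    also have "\<dots> = (\<Sum>i<card t. f i x)"
      by (simp add: f_def sum_component sum.reindex_bij_betw[OF h, symmetric])
    finally show ?thesis .
  qed
  show ?thesis by (rule that[OF eig sum])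
qed

lemma mpow_column_eigen_expansion:
  fixes M :: "'b::finite \<Rightarrow> 'b \<Rightarrow> real" and n :: nat
  assumes eig: "\<And>i. i < n \<Longrightarrow> in_eigenspace M (\<mu> i) (f i)"
    and unit: "\<And>x. (if x = a then 1 else 0) = (\<Sum>i<n. f i x)"
  shows "mpow (\<lambda>x y. z * of_real (M x y)) k c a = (\<Sum>i<n. (z * of_real (\<mu> i)) ^ k * of_real (f i c))"
proof (induction k arbitrary: c)
  case 0
  have "(if c = a then 1 else 0 :: complex) = of_real (if c = a then 1 else 0)" by simp
  also have "\<dots> = (\<Sum>i<n. of_real (f i c))" using unit[of c] by simp
  finally show ?case by simp
next
  case (Suc k)
  have "mpow (\<lambda>x y. z * of_real (M x y)) (Suc k) c a
      = (\<Sum>y\<in>UNIV. z * of_real (M c y) * (\<Sum>i<n. (z * of_real (\<mu> i)) ^ k * of_real (f i y)))"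
    by (simp add: mmult_def Suc.IH)
  also have "\<dots> = (\<Sum>i<n. (z * of_real (\<mu> i)) ^ k * z * of_real (\<Sum>y\<in>UNIV. M c y * f i y))"
    by (simp add: sum_distrib_left sum_distrib_right sum.swap[of _ UNIV] algebra_simps)
  also have "\<dots> = (\<Sum>i<n. (z * of_real (\<mu> i)) ^ Suc k * of_real (f i c))"
    using eig by (intro sum.cong refl) (simp add: in_eigenspace_def algebra_simps)
  finally show ?case .
qed

lemma mexp_column_eigen_expansion:
  fixes M :: "'b::finite \<Rightarrow> 'b \<Rightarrow> real" and n :: nat
  assumes "\<And>i. i < n \<Longrightarrow> in_eigenspace M (\<mu> i) (f i)"
    and "\<And>x. (if x = a then 1 else 0) = (\<Sum>i<n. f i x)"
  shows "mexp (\<lambda>x y. z * of_real (M x y)) c a = (\<Sum>i<n. exp (z * of_real (\<mu> i)) * of_real (f i c))"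
proof -
  have "(\<lambda>k. \<Sum>i<n. (z * of_real (\<mu> i)) ^ k /\<^sub>R fact k * of_real (f i c))
        sums (\<Sum>i<n. exp (z * of_real (\<mu> i)) * of_real (f i c))"
    by (intro sums_sum sums_mult2 exp_converges)
  moreover have "(\<lambda>k. \<Sum>i<n. (z * of_real (\<mu> i)) ^ k /\<^sub>R fact k * of_real (f i c))
      = (\<lambda>k. mpow (\<lambda>x y. z * of_real (M x y)) k c a / of_nat (fact k))"
    by (simp add: mpow_column_eigen_expansion[OF assms] sum_divide_distrib scaleR_conv_of_real
        divide_inverse sum_distrib_left algebra_simps)
  ultimately show ?thesis unfolding mexp_def by (simp add: sums_iff)
qed

section \<open>The Laplacian spectrum of the blow-up of \<open>K2 \<times> H\<close>\<close>

definition real_laplacian :: "('a::finite \<Rightarrow> 'a \<Rightarrow> bool) \<Rightarrow> 'a \<Rightarrow> 'a \<Rightarrow> real" where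
  "real_laplacian E u v = (if u = v then real (Defs.degree E u) else 0) - adj E u v"

lemma laplacian_eq_of_real: "laplacian E u v = of_real (real_laplacian E u v)"
  by (simp add: laplacian_def real_laplacian_def)

lemma real_laplacian_commute:
  assumes "simple_graph E"
  shows "real_laplacian E u v = real_laplacian E v u"
  using assms by (auto simp: real_laplacian_def adj_def simple_graph_def)

lemma real_laplacian_apply:
  "(\<Sum>y\<in>UNIV. real_laplacian E x y * w y) = real (Defs.degree E x) * w x - (\<Sum>y\<in>UNIV. adj E x y * w y)"
  by (simp add: real_laplacian_def left_diff_distrib sum_subtractf if_distrib[of "\<lambda>d. d * w _"]
      sum.delta cong: if_cong)

lemma in_eigenspace_real_laplacian_iff:
  assumes "\<And>x. Defs.degree E x = k"
  shows "in_eigenspace (real_laplacian E) \<mu> w \<longleftrightarrow> in_eigenspace (adj E) (real k - \<mu>) w"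
  unfolding in_eigenspace_def real_laplacian_apply assms by (auto simp: algebra_simps)

lemma regular_adj_eigenvalue_degree:
  assumes "\<And>x. Defs.degree E x = k"
  shows "adj_eigenvalue E (real k)"
proof -
  have "(\<Sum>y\<in>UNIV. adj E x y * 1) = real k * 1" for x
    using assms[of x] by (simp add: adj_def sum.If_cases Defs.degree_def)
  thus ?thesis unfolding adj_eigenvalue_def by (intro exI[of _ "\<lambda>_. 1"]) (simp add: fun_eq_iff)
qed

lemma not_bipartite_regular_degree_pos:
  fixes E :: "'a::finite \<Rightarrow> 'a \<Rightarrow> bool"
  assumes "\<not> bipartite E" and "\<And>x. Defs.degree E x = k"
  shows "k > 0"
proof -
  obtain u v where "E u v" using assms(1) by (auto simp: bipartite_def)
  hence "Defs.degree E u > 0" by (auto simp: Defs.degree_def card_gt_0_iff)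
  thus ?thesis using assms(2) by simp
qed

lemma sum_UNIV_bool_times:
  fixes F :: "bool \<times> 'b::finite \<Rightarrow> 'c::comm_monoid_add"
  shows "(\<Sum>y\<in>UNIV. F y) = (\<Sum>q\<in>UNIV. F (False, q)) + (\<Sum>q\<in>UNIV. F (True, q))"
proof -
  have "(\<Sum>y\<in>UNIV. F y) = (\<Sum>l\<in>UNIV. \<Sum>q\<in>UNIV. F (l, q))"
    by (simp add: sum.cartesian_product UNIV_Times_UNIV[symmetric] del: UNIV_Times_UNIV)
  thus ?thesis by (simp add: UNIV_bool)
qed

lemma degree_blowup2: "Defs.degree (blowup2 G) (l, p) = 2 * Defs.degree G p"
proof -
  have "{q. blowup2 G (l, p) q} = UNIV \<times> {q. G p q}" by (auto simp: blowup2_def)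
  thus ?thesis by (simp add: Defs.degree_def card_cartesian_product)
qed

lemma adj_blowup2_apply:
  fixes G :: "'a::finite \<Rightarrow> 'a \<Rightarrow> bool"
  shows "(\<Sum>y\<in>UNIV. adj (blowup2 G) (l, p) y * v y) = (\<Sum>q\<in>UNIV. adj G p q * (v (False, q) + v (True, q)))"
  by (subst sum_UNIV_bool_times) (simp add: adj_def blowup2_def sum.distrib algebra_simps)

lemma degree_dprod_K2: "Defs.degree (dprod K2 H) (x, a) = Defs.degree H a"
proof -
  have "{q. dprod K2 H (x, a) q} = {\<not> x} \<times> {b. H a b}" by (auto simp: dprod_def K2_def)
  thus ?thesis by (simp add: Defs.degree_def card_cartesian_product)
qed

lemma adj_dprod_K2_apply:
  fixes H :: "'a::finite \<Rightarrow> 'a \<Rightarrow> bool"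
  shows "(\<Sum>q\<in>UNIV. adj (dprod K2 H) (x, a) q * s q) = (\<Sum>b\<in>UNIV. adj H a b * s (\<not> x, b))"
  by (subst sum_UNIV_bool_times) (cases x; simp add: adj_def dprod_def K2_def)

lemma simple_graph_K2: "simple_graph K2"
  by (auto simp: simple_graph_def K2_def)

lemma simple_graph_dprod: "simple_graph E \<Longrightarrow> simple_graph F \<Longrightarrow> simple_graph (dprod E F)"
  by (auto simp: simple_graph_def dprod_def)

lemma simple_graph_blowup2: "simple_graph G \<Longrightarrow> simple_graph (blowup2 G)"
  by (auto simp: simple_graph_def blowup2_def)

lemma blowup2_laplacian_eigenspace:
  fixes G :: "'a::finite \<Rightarrow> 'a \<Rightarrow> bool"
  assumes eig: "in_eigenspace (real_laplacian (blowup2 G)) \<mu> v"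
  shows "in_eigenspace (real_laplacian G) (\<mu> / 2) (\<lambda>p. v (False, p) + v (True, p))"
    and "(2 * real (Defs.degree G p) - \<mu>) * (v (False, p) - v (True, p)) = 0"
proof -
  define s where "s p = v (False, p) + v (True, p)" for p
  have row: "2 * real (Defs.degree G p) * v (l, p) - (\<Sum>q\<in>UNIV. adj G p q * s q) = \<mu> * v (l, p)" for l p
    using eig[unfolded in_eigenspace_def, rule_format, of "(l, p)"]
    by (simp add: real_laplacian_apply degree_blowup2 adj_blowup2_apply s_def)
  have "real (Defs.degree G p) * s p - (\<Sum>q\<in>UNIV. adj G p q * s q) = \<mu> / 2 * s p" for p
    using row[where l=False and p=p] row[where l=True and p=p] by (simp add: s_def algebra_simps)
  thus "in_eigenspace (real_laplacian G) (\<mu> / 2) (\<lambda>p. v (False, p) + v (True, p))"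
    unfolding in_eigenspace_def real_laplacian_apply s_def by blast
  show "(2 * real (Defs.degree G p) - \<mu>) * (v (False, p) - v (True, p)) = 0"
    using row[where l=False and p=p] row[where l=True and p=p] by (simp add: algebra_simps)
qed

lemma dprod_K2_adj_eigenvalue:
  fixes H :: "'a::finite \<Rightarrow> 'a \<Rightarrow> bool"
  assumes eig: "in_eigenspace (adj (dprod K2 H)) lam s" and nonzero: "s \<noteq> (\<lambda>_. 0)"
  shows "adj_eigenvalue H lam \<or> adj_eigenvalue H (- lam)"
proof -
  define t where "t a = s (False, a) + s (True, a)" for a
  define r where "r a = s (False, a) - s (True, a)" for a
  have row: "(\<Sum>b\<in>UNIV. adj H a b * s (\<not> x, b)) = lam * s (x, a)" for x a
    using eig[unfolded in_eigenspace_def, rule_format, of "(x, a)"] by (simp add: adj_dprod_K2_apply)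
  have "in_eigenspace (adj H) lam t"
    using row[where x=True] row[where x=False]
    by (simp add: in_eigenspace_def t_def sum.distrib algebra_simps)
  moreover have "in_eigenspace (adj H) (- lam) r"
    using row[where x=True] row[where x=False]
    by (simp add: in_eigenspace_def r_def sum_subtractf algebra_simps)
  moreover have "t \<noteq> (\<lambda>_. 0) \<or> r \<noteq> (\<lambda>_. 0)"
  proof (rule ccontr)
    assume "\<not> ?thesis"
    hence "s (x, a) = 0" for x a
      by (cases x) (auto simp: t_def r_def fun_eq_iff dest: spec[of _ a])
    with nonzero show False by (auto simp: fun_eq_iff)
  qed
  ultimately show ?thesis by (auto simp: adj_eigenvalue_iff_in_eigenspace)
qed

lemma exp_uminus_eq_minus_one_iff: "exp (- z) = - 1 \<longleftrightarrow> exp z = (- 1 :: complex)"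
  by (metis exp_minus inverse_minus_eq inverse_1 inverse_inverse_eq)

lemma blowup2_dprod_K2_eigenvector_phase:
  fixes H :: "'a::finite \<Rightarrow> 'a \<Rightarrow> bool"
  assumes deg: "\<And>a. Defs.degree H a = k"
    and phase: "\<And>lam. adj_eigenvalue H lam \<Longrightarrow> exp (\<i> * of_real (2 * \<tau> * lam)) = - 1"
    and eig: "in_eigenspace (real_laplacian (blowup2 (dprod K2 H))) \<mu> v"
  shows "exp (\<i> * of_real (\<tau> * \<mu>)) * of_real (v (l, p))
         = - exp (\<i> * of_real (2 * \<tau> * k)) * of_real (v (\<not> l, p))"
proof -
  define s where "s p = v (False, p) + v (True, p)" for p
  have deg_dprod: "Defs.degree (dprod K2 H) x = k" for x
    using deg by (cases x) (simp add: degree_dprod_K2)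
  have s_eig: "in_eigenspace (adj (dprod K2 H)) (real k - \<mu> / 2) s"
    using blowup2_laplacian_eigenspace(1)[OF eig] in_eigenspace_real_laplacian_iff[OF deg_dprod]
    unfolding s_def by blast
  have diff: "(2 * real k - \<mu>) * (v (False, p) - v (True, p)) = 0"
    using blowup2_laplacian_eigenspace(2)[OF eig] deg_dprod by simp
  show ?thesis
  proof (cases "s = (\<lambda>_. 0)")
    case True
    have "v (False, p) + v (True, p) = 0" using fun_cong[OF True, of p] by (simp add: s_def)
    hence anti: "v (\<not> l, p) = - v (l, p)" by (cases l) auto
    hence "(2 * real k - \<mu>) * v (l, p) = 0"
      using diff by (cases l) (auto simp: algebra_simps)
    hence "v (l, p) = 0 \<or> \<mu> = 2 * real k" by auto
    hence "exp (\<i> * of_real (\<tau> * \<mu>)) * of_real (v (l, p))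
        = exp (\<i> * of_real (2 * \<tau> * k)) * of_real (v (l, p))"
      by (auto simp: ac_simps)
    thus ?thesis using anti by simp
  next
    case False
    define lam where "lam = real k - \<mu> / 2"
    have lam_phase: "exp (\<i> * of_real (2 * \<tau> * lam)) = - 1"
      using dprod_K2_adj_eigenvalue[OF s_eig False, folded lam_def] phase[of lam] phase[of "- lam"]
        exp_uminus_eq_minus_one_iff[of "\<i> * of_real (2 * \<tau> * lam)"] by auto
    hence "lam \<noteq> 0" by auto
    hence sym: "v (\<not> l, p) = v (l, p)"
      using diff unfolding lam_def by (cases l) auto
    have "\<i> * of_real (\<tau> * \<mu>) = \<i> * of_real (2 * \<tau> * k) - \<i> * of_real (2 * \<tau> * lam)"
      by (simp add: lam_def algebra_simps)
    hence "exp (\<i> * of_real (\<tau> * \<mu>)) = - exp (\<i> * of_real (2 * \<tau> * k))"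
      using lam_phase by (simp add: exp_diff)
    thus ?thesis using sym by simp
  qed
qed

lemma blowup2_dprod_K2_laplacian_pst:
  fixes H :: "'a::finite \<Rightarrow> 'a \<Rightarrow> bool"
  assumes simple: "simple_graph H" and deg: "\<And>a. Defs.degree H a = k"
    and phase: "\<And>lam. adj_eigenvalue H lam \<Longrightarrow> exp (\<i> * of_real (2 * \<tau> * lam)) = - 1"
    and "\<tau> > 0"
  shows "laplacian_pst (blowup2 (dprod K2 H)) (False, u) (True, u)"
proof -
  let ?G = "blowup2 (dprod K2 H)"
  have "simple_graph ?G" by (intro simple_graph_blowup2 simple_graph_dprod simple_graph_K2 simple)
  hence sym: "\<And>x y. real_laplacian ?G x y = real_laplacian ?G y x" by (rule real_laplacian_commute)
  obtain n :: nat and f \<mu>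
    where eig: "\<And>i. i < n \<Longrightarrow> in_eigenspace (real_laplacian ?G) (\<mu> i) (f i)"
      and unit: "\<And>x. (if x = (False, u) then 1 else 0) = (\<Sum>i<n. f i x)"
    by (rule symmetric_eigenspace_decomposition[OF sym]) (rule that)
  define C where "C = exp (\<i> * of_real (2 * \<tau> * k))"
  have mexp_column: "mexp (\<lambda>x y. \<i> * of_real \<tau> * laplacian ?G x y) (l, p) (False, u)
        = (if (l, p) = (True, u) then - C else 0)" for l p
  proof -
    have "mexp (\<lambda>x y. \<i> * of_real \<tau> * laplacian ?G x y) (l, p) (False, u)
        = (\<Sum>i<n. exp (\<i> * of_real \<tau> * of_real (\<mu> i)) * of_real (f i (l, p)))"
      unfolding laplacian_eq_of_real by (rule mexp_column_eigen_expansion[OF eig unit])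
    also have "\<dots> = (\<Sum>i<n. - C * of_real (f i (\<not> l, p)))"
    proof (rule sum.cong[OF refl])
      fix i assume "i \<in> {..<n}"
      thus "exp (\<i> * of_real \<tau> * of_real (\<mu> i)) * of_real (f i (l, p)) = - C * of_real (f i (\<not> l, p))"
        using blowup2_dprod_K2_eigenvector_phase[OF deg phase eig[of i]]
        by (simp add: C_def mult.assoc)
    qed
    also have "\<dots> = - C * of_real (\<Sum>i<n. f i (\<not> l, p))"
      by (simp add: sum_distrib_left)
    also have "\<dots> = (if (l, p) = (True, u) then - C else 0)"
      using unit[of "(\<not> l, p)"] by (auto simp del: of_real_sum)
    finally show ?thesis .
  qed
  have "\<forall>c. mexp (\<lambda>x y. \<i> * of_real \<tau> * laplacian ?G x y) c (False, u)
      = (if c = (True, u) then - C else 0)"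
    using mexp_column by simp
  thus ?thesis unfolding laplacian_pst_def using \<open>\<tau> > 0\<close> by blast
qed

lemma exp_i_pi_odd: "odd q \<Longrightarrow> exp (\<i> * of_real (pi * of_int q)) = - 1"
  by (metis Ints_of_int cos_eq_minus1 cos_npi_int exp_integer_2pi_plus1 mult.commute)

lemma exp_nu2_scaled_eq_minus_one:
  assumes "nu2 m = enat \<nu>"
  shows "exp (\<i> * of_real (2 * (pi / 2 ^ (\<nu> + 1)) * of_int m)) = - 1"
proof -
  have "m \<noteq> 0" and mult: "multiplicity 2 m = \<nu>" using assms by (auto simp: nu2_def split: if_splits)
  from \<open>m \<noteq> 0\<close> obtain q where "m = 2 ^ multiplicity 2 m * q" "odd q"
    by (rule multiplicity_decompose') auto
  hence q: "m = 2 ^ \<nu> * q" "odd q" unfolding mult .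
  have "2 * (pi / 2 ^ (\<nu> + 1)) * of_int m = pi * of_int q"
    using q(1) by simp
  thus ?thesis using exp_i_pi_odd[OF q(2)] by simp
qed

theorem corollary8:
  fixes H :: "'a::finite \<Rightarrow> 'a \<Rightarrow> bool"
  assumes "simple_graph H"
    and "regular H"
    and "\<not> bipartite H"
    and "\<exists>k::enat. \<forall>lam. adj_eigenvalue H lam \<longrightarrow> (\<exists>m::int. lam = of_int m \<and> nu2 m = k)"
  shows "\<forall>u :: bool \<times> 'a. laplacian_pst (blowup2 (dprod K2 H)) (False, u) (True, u)"
proof
  fix u :: "bool \<times> 'a"
  obtain k where deg: "\<And>a. Defs.degree H a = k" using assms(2) by (auto simp: regular_def)
  obtain K where K: "\<And>lam. adj_eigenvalue H lam \<Longrightarrow> \<exists>m::int. lam = of_int m \<and> nu2 m = K"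
    using assms(4) by blast
  obtain m where "real k = of_int m" "nu2 m = K"
    using K[OF regular_adj_eigenvalue_degree[OF deg]] by blast
  moreover have "k > 0" by (rule not_bipartite_regular_degree_pos[OF assms(3) deg])
  ultimately obtain \<nu> where K_eq: "K = enat \<nu>" by (auto simp: nu2_def)
  define \<tau> where "\<tau> = pi / 2 ^ (\<nu> + 1)"
  have "exp (\<i> * of_real (2 * \<tau> * lam)) = - 1" if lam: "adj_eigenvalue H lam" for lam
  proof -
    obtain m where "lam = of_int m" "nu2 m = enat \<nu>" using K[OF lam] K_eq by blast
    thus ?thesis unfolding \<tau>_def by (simp only: exp_nu2_scaled_eq_minus_one)
  qed
  moreover have "\<tau> > 0" by (simp add: \<tau>_def)
  ultimately show "laplacian_pst (blowup2 (dprod K2 H)) (False, u) (True, u)"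
    by (rule blowup2_dprod_K2_laplacian_pst[OF assms(1) deg])
qed

end
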